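(* Let $R=\bigoplus_{i\ge0}R_i$ be a graded ring and $s,t\in R_0$ with $sR_0+tR_0=R_0$. Let $\eta\in\mathrm{GL}_n(R_{st},(R_+)_{st})$ with $e_1\eta=e_1$. Then there exist $\eta_1\in\mathrm{GL}_n(R_s,(R_+)_s)$ and $\eta_2\in\mathrm{GL}_n(R_t,(R_+)_t)$ such that $\eta=(\eta_1)_t(\eta_2)_s$ in $\mathrm{GL}_n(R_{st})$, and $e_1\eta_i=e_1$ for $i=1,2$.
   Context: Rings are commutative Noetherian with $1\ne0$ of finite Krull dimension; a graded ring is $R=\bigoplus_{i\ge0}R_i$ with non-trivial $\mathbb N$-grading and $R_+=\bigoplus_{i\ge1}R_i$. For an ideal $I\subset B$, $\mathrm{GL}_n(B,I)=\{\alpha\in\mathrm{GL}_n(B):\alpha\equiv\mathrm{Id}\bmod I\}$. $e_1=(1,0,\dots,0)$. For a matrix $\beta$ over $R_s$, $\beta_t$ denotes its image over $R_{st}$. *)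

theory Defs
  imports "Jordan_Normal_Form.Matrix"
begin

definition is_ideal :: "'a::comm_ring_1 set \<Rightarrow> bool" where
  "is_ideal I \<longleftrightarrow> 0 \<in> I \<and> (\<forall>x\<in>I. \<forall>y\<in>I. x + y \<in> I) \<and> (\<forall>x\<in>I. \<forall>r. r * x \<in> I)"

definition is_prime_ideal :: "'a::comm_ring_1 set \<Rightarrow> bool" where
  "is_prime_ideal P \<longleftrightarrow> is_ideal P \<and> P \<noteq> UNIV \<and> (\<forall>a b. a * b \<in> P \<longrightarrow> a \<in> P \<or> b \<in> P)"

definition noetherian :: "'a::comm_ring_1 itself \<Rightarrow> bool" where
  "noetherian _ \<longleftrightarrow> (\<forall>I :: nat \<Rightarrow> 'a set. (\<forall>i. is_ideal (I i) \<and> I i \<subseteq> I (Suc i))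
        \<longrightarrow> (\<exists>N. \<forall>m\<ge>N. I m = I N))"

definition finite_krull_dim :: "'a::comm_ring_1 itself \<Rightarrow> bool" where
  "finite_krull_dim _ \<longleftrightarrow> (\<exists>d::nat. \<forall>(P :: nat \<Rightarrow> 'a set) m.
        (\<forall>i\<le>m. is_prime_ideal (P i)) \<and> (\<forall>i<m. P i \<subset> P (Suc i)) \<longrightarrow> m \<le> d)"

definition graded_ring :: "(nat \<Rightarrow> 'a::comm_ring_1 set) \<Rightarrow> bool" where
  "graded_ring G \<longleftrightarrow>
     (\<forall>i. 0 \<in> G i \<and> (\<forall>x\<in>G i. \<forall>y\<in>G i. x + y \<in> G i \<and> - x \<in> G i)) \<and>
     (\<forall>i j. \<forall>x\<in>G i. \<forall>y\<in>G j. x * y \<in> G (i + j)) \<and>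
     (\<forall>x. \<exists>!f. (\<forall>i. f i \<in> G i) \<and> finite {i. f i \<noteq> 0} \<and> x = (\<Sum>i\<in>{i. f i \<noteq> 0}. f i))"

definition nontrivial_grading :: "(nat \<Rightarrow> 'a::comm_ring_1 set) \<Rightarrow> bool" where
  "nontrivial_grading G \<longleftrightarrow> (\<exists>i\<ge>1. G i \<noteq> {0})"

definition R_plus :: "(nat \<Rightarrow> 'a::comm_ring_1 set) \<Rightarrow> 'a set" where
  "R_plus G = {x. \<exists>N f. (\<forall>i. f i \<in> G i) \<and> x = (\<Sum>i\<in>{1..N}. f i)}"

text \<open>The pair (a,k) represents a/s^k in R_s.  Equality in R_s:\<close>
definition loc_eq :: "'a::comm_ring_1 \<Rightarrow> 'a \<Rightarrow> nat \<Rightarrow> 'a \<Rightarrow> nat \<Rightarrow> bool" where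
  "loc_eq s a k b m \<longleftrightarrow> (\<exists>l. s ^ l * (a * s ^ m - b * s ^ k) = 0)"

text \<open>Membership of a/s^k in the extended ideal \<open>I_s = {b/s^m. b \<in> I}\<close>.\<close>
definition loc_mem :: "'a::comm_ring_1 \<Rightarrow> 'a set \<Rightarrow> 'a \<Rightarrow> nat \<Rightarrow> bool" where
  "loc_mem s I a k \<longleftrightarrow> (\<exists>b\<in>I. \<exists>m. loc_eq s a k b m)"

text \<open>An n x n matrix over R_s is represented as (A,k), meaning (1/s^k) A with A over R.
  Equality of such matrices in \<open>M_n(R_s)\<close>:\<close>
definition lmat_eq :: "nat \<Rightarrow> 'a::comm_ring_1 \<Rightarrow> 'a mat \<Rightarrow> nat \<Rightarrow> 'a mat \<Rightarrow> nat \<Rightarrow> bool" where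
  "lmat_eq n s A k B m \<longleftrightarrow> (\<forall>i<n. \<forall>j<n. loc_eq s (A $$ (i,j)) k (B $$ (i,j)) m)"

text \<open>(A,k) represents an element of \<open>GL_n(R_s, I_s)\<close>: invertible over R_s and
  congruent to the identity modulo \<open>I_s\<close>.\<close>
definition lGL :: "nat \<Rightarrow> 'a::comm_ring_1 \<Rightarrow> 'a set \<Rightarrow> 'a mat \<Rightarrow> nat \<Rightarrow> bool" where
  "lGL n s I A k \<longleftrightarrow> A \<in> carrier_mat n n \<and>
     (\<exists>B m. B \<in> carrier_mat n n \<and> lmat_eq n s (A * B) (k + m) (1\<^sub>m n) 0
                                  \<and> lmat_eq n s (B * A) (k + m) (1\<^sub>m n) 0) \<and>
     (\<forall>i<n. \<forall>j<n. loc_mem s I (A $$ (i,j) - (if i = j then s ^ k else 0)) k)"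

text \<open>\<open>e_1 (A/s^k) = e_1\<close> in \<open>R_s^n\<close>: the first row equals (1,0,...,0).\<close>
definition first_row_e1 :: "nat \<Rightarrow> 'a::comm_ring_1 \<Rightarrow> 'a mat \<Rightarrow> nat \<Rightarrow> bool" where
  "first_row_e1 n s A k \<longleftrightarrow> (\<forall>j<n. loc_eq s (A $$ (0,j)) k (if j = 0 then 1 else 0) 0)"

end

theory Submission
  imports Defs "Jordan_Normal_Form.Char_Poly"
begin

text \<open>Clearing denominators turns \<open>\<eta>\<close> into a matrix \<open>H\<close> over \<open>R\<close> with
  \<open>H B = B H = (s t)\<^sup>K\<^sup>+\<^sup>J I\<close>, \<open>H \<equiv> (s t)\<^sup>K I\<close> modulo \<open>R\<^sub>+\<close> and first row \<open>(s t)\<^sup>K e\<^sub>1\<close>.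
  Homogenisation \<open>x = \<Sum> x\<^sub>i \<mapsto> x(X) = \<Sum> x\<^sub>i X\<^sup>i\<close> is a ring homomorphism
  \<open>R \<rightarrow> R[X]\<close> with \<open>x(1) = x\<close> and \<open>x(0)\<close> the degree-0 part of \<open>x\<close>. Pick
  \<open>\<lambda> = b t\<^sup>N\<close>, \<open>\<mu> = a s\<^sup>N\<close> with \<open>\<lambda> + \<mu> = 1\<close> and split \<open>H = H(\<lambda>) \<cdot> B(\<lambda>) H(\<lambda> + \<mu>) / (s t)\<^sup>K\<^sup>+\<^sup>J\<close>.
  The polynomial matrix \<open>H(X)\<close> has constant term \<open>(s t)\<^sup>K I\<close> and is evaluated at a multiple
  of \<open>t\<^sup>N\<close>, so \<open>H(\<lambda>)\<close> is divisible by \<open>t\<^sup>K\<close> and gives a factor over \<open>R\<^sub>s\<close>; likewise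
  \<open>B(\<lambda>) H(\<lambda> + X)\<close> has constant term \<open>(s t)\<^sup>K\<^sup>+\<^sup>J I\<close> and is evaluated at \<open>\<mu>\<close>, which gives
  a factor over \<open>R\<^sub>t\<close>. Their inverses come from the polynomial inverses \<open>B(X)\<close> and
  \<open>B(\<lambda> + X) H(\<lambda>)\<close>, the congruence modulo \<open>R\<^sub>+\<close> holds because the degree-0 parts of all
  coefficients are constant, and \<open>e\<^sub>1 H = (s t)\<^sup>K e\<^sub>1\<close> gives \<open>(s t)\<^sup>K e\<^sub>1 B(\<lambda>) = (s t)\<^sup>K\<^sup>+\<^sup>J e\<^sub>1\<close>,
  which keeps both first rows trivial.\<close>

lemma finite_coeff_support: "finite {i. coeff p i \<noteq> 0}"
  by (metis (mono_tags, lifting) finite_nat_set_iff_bounded_le le_degree mem_Collect_eq)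

lemma poly_1_eq_sum_coeffs:
  "poly (p::'a::comm_semiring_1 poly) 1 = (\<Sum>i\<in>{i. coeff p i \<noteq> 0}. coeff p i)"
proof -
  have "poly p 1 = (\<Sum>i\<le>degree p. coeff p i)" by (simp add: poly_altdef[of p 1])
  also have "\<dots> = (\<Sum>i\<in>{i. coeff p i \<noteq> 0}. coeff p i)"
    by (rule sum.mono_neutral_right) (auto intro: le_degree)
  finally show ?thesis .
qed

lemma const_plus_pCons_poly_shift: "p = [:coeff p 0:] + pCons 0 (poly_shift 1 p)"
  by (rule poly_eqI) (auto simp: coeff_poly_shift coeff_pCons split: nat.split)

lemma poly_shift_degree_0: "degree p = 0 \<Longrightarrow> n > 0 \<Longrightarrow> poly_shift n p = 0"
  by (simp add: poly_eq_iff coeff_poly_shift coeff_eq_0)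

lemma poly_shift_smult: "poly_shift n (smult c p) = smult c (poly_shift n p)"
  by (simp add: poly_eq_iff coeff_poly_shift)

lemma map_poly_poly_shift: "f 0 = 0 \<Longrightarrow> map_poly f (poly_shift n p) = poly_shift n (map_poly f p)"
  by (simp add: poly_eq_iff coeff_poly_shift coeff_map_poly)

lemma const_poly_hom: "comm_ring_hom (\<lambda>x::'a::comm_ring_1. [:x:])"
  by unfold_locales (auto simp: one_pCons)

lemma index_mult_mat_sum:
  assumes "A \<in> carrier_mat m n" "B \<in> carrier_mat n l" "i < m" "j < l"
  shows "(A * B) $$ (i, j) = (\<Sum>k<n. A $$ (i, k) * B $$ (k, j))"
  using assms by (auto simp: scalar_prod_def atLeast0LessThan intro!: sum.cong)

lemma sum_diagonal_plus_mult:
  fixes M N :: "nat \<Rightarrow> 'a::comm_ring_1"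
  assumes "i < n" "j < n"
  shows "(\<Sum>k<n. ((if i = k then \<alpha> else 0) + M k) * ((if k = j then \<beta> else 0) + N k))
       = (if i = j then \<alpha> * \<beta> else 0) + \<alpha> * N i + \<beta> * M j + (\<Sum>k<n. M k * N k)"
proof -
  have "(\<Sum>k<n. ((if i = k then \<alpha> else 0) + M k) * ((if k = j then \<beta> else 0) + N k))
     = (\<Sum>k<n. (if i = k then (if k = j then \<alpha> * \<beta> else 0) else 0))
       + (\<Sum>k<n. (if i = k then \<alpha> * N k else 0)) + (\<Sum>k<n. (if k = j then \<beta> * M k else 0))
       + (\<Sum>k<n. M k * N k)"
    unfolding sum.distrib[symmetric]
    by (intro sum.cong refl) (cases "i = k"; cases "k = j"; simp add: algebra_simps)
  also have "\<dots> = (if i = j then \<alpha> * \<beta> else 0) + \<alpha> * N i + \<beta> * M j + (\<Sum>k<n. M k * N k)"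
    using assms by (simp add: sum.delta sum.delta')
  finally show ?thesis .
qed

lemma (in semiring_hom) mat_hom_smult_one: "mat\<^sub>h (c \<cdot>\<^sub>m 1\<^sub>m n) = hom c \<cdot>\<^sub>m 1\<^sub>m n"
  by (rule eq_matI) auto

lemma mult_scalar_sandwich:
  fixes A B C D :: "'a::comm_ring_1 mat"
  assumes A: "A \<in> carrier_mat n n" and B: "B \<in> carrier_mat n n"
    and C: "C \<in> carrier_mat n n" and D: "D \<in> carrier_mat n n"
    and BC: "B * C = b \<cdot>\<^sub>m 1\<^sub>m n" and AD: "A * D = d \<cdot>\<^sub>m 1\<^sub>m n"
  shows "(A * B) * (C * D) = (b * d) \<cdot>\<^sub>m 1\<^sub>m n"
proof -
  have "(A * B) * (C * D) = A * (B * (C * D))" by (rule assoc_mult_mat[OF A B mult_carrier_mat[OF C D]])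
  also have "B * (C * D) = (B * C) * D" by (rule assoc_mult_mat[OF B C D, symmetric])
  also have "(B * C) * D = b \<cdot>\<^sub>m D"
    unfolding BC mult_smult_assoc_mat[OF one_carrier_mat D] using D by simp
  also have "A * (b \<cdot>\<^sub>m D) = b \<cdot>\<^sub>m (A * D)" using A D by (rule mult_smult_distrib)
  finally show ?thesis unfolding AD by (auto intro!: eq_matI)
qed

section \<open>Localisation at powers of an element\<close>

lemma lmat_eq_smult:
  "M \<in> carrier_mat n n \<Longrightarrow> lmat_eq n u M k (u ^ m \<cdot>\<^sub>m M) (k + m)"
  unfolding lmat_eq_def loc_eq_def by (auto intro!: exI[of _ 0] simp: power_add ac_simps)

lemma lGL_if_scalar_inverse:
  assumes "A \<in> carrier_mat n n" "B \<in> carrier_mat n n"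
    and "A * B = x ^ (k + m) \<cdot>\<^sub>m 1\<^sub>m n" "B * A = x ^ (k + m) \<cdot>\<^sub>m 1\<^sub>m n"
    and "\<And>i j. i < n \<Longrightarrow> j < n \<Longrightarrow> A $$ (i, j) - (if i = j then x ^ k else 0) \<in> I"
  shows "lGL n x I A k"
  unfolding lGL_def loc_mem_def lmat_eq_def loc_eq_def
proof (intro conjI exI allI impI)
  fix i j assume ij: "i < n" "j < n"
  show "x ^ 0 * ((A * B) $$ (i, j) * x ^ 0 - 1\<^sub>m n $$ (i, j) * x ^ (k + m)) = 0"
    "x ^ 0 * ((B * A) $$ (i, j) * x ^ 0 - 1\<^sub>m n $$ (i, j) * x ^ (k + m)) = 0"
    using assms(3,4) ij by simp_all
  show "\<exists>b\<in>I. \<exists>m l. x ^ l * ((A $$ (i, j) - (if i = j then x ^ k else 0)) * x ^ m - b * x ^ k) = 0"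
    using assms(5)[OF ij]
    by (intro bexI[of _ "A $$ (i, j) - (if i = j then x ^ k else 0)"] exI[of _ k] exI[of _ 0]) auto
qed (use assms(1,2) in auto)

lemma eventually_pow_mult_eq_0:
  fixes u x :: "'a::comm_ring_1"
  assumes "u ^ l * x = 0"
  shows "\<forall>\<^sub>F L in sequentially. u ^ L * x = 0"
  unfolding eventually_sequentially
proof (intro exI allI impI)
  fix L assume "l \<le> L"
  then obtain r where "L = l + r" using le_Suc_ex by blast
  then have "u ^ L * x = u ^ r * (u ^ l * x)" by (simp add: power_add ac_simps)
  then show "u ^ L * x = 0" using assms by simp
qed

lemma eventually_pow_mult_entries_eq_0:
  fixes u :: "'a::comm_ring_1" and n :: nat
  assumes "\<And>i j. i < n \<Longrightarrow> j < n \<Longrightarrow> \<exists>l. u ^ l * f i j = 0"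
  shows "\<forall>\<^sub>F L in sequentially. \<forall>i<n. \<forall>j<n. u ^ L * f i j = 0"
proof -
  have "\<forall>\<^sub>F L in sequentially. u ^ L * f i j = 0" if "i < n" "j < n" for i j
    using assms[OF that] eventually_pow_mult_eq_0 by blast
  then have "\<forall>\<^sub>F L in sequentially. \<forall>i\<in>{..<n}. \<forall>j\<in>{..<n}. u ^ L * f i j = 0"
    by (intro eventually_ball_finite ballI) auto
  then show ?thesis by (rule eventually_mono) auto
qed

lemma lmat_eq_one_eventually:
  fixes u :: "'a::comm_ring_1"
  assumes M: "M \<in> carrier_mat n n" and "lmat_eq n u M k (1\<^sub>m n) 0"
  shows "\<forall>\<^sub>F L in sequentially. u ^ L \<cdot>\<^sub>m M = u ^ (L + k) \<cdot>\<^sub>m 1\<^sub>m n"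
proof -
  have "\<exists>l. u ^ l * (M $$ (i, j) - (if i = j then u ^ k else 0)) = 0" if ij: "i < n" "j < n" for i j
  proof -
    obtain l where "u ^ l * (M $$ (i, j) * u ^ 0 - 1\<^sub>m n $$ (i, j) * u ^ k) = 0"
      using assms(2) ij unfolding lmat_eq_def loc_eq_def by blast
    then show ?thesis using ij by (intro exI[of _ l]) (cases "i = j"; simp)
  qed
  then have "\<forall>\<^sub>F L in sequentially. \<forall>i<n. \<forall>j<n.
      u ^ L * (M $$ (i, j) - (if i = j then u ^ k else 0)) = 0"
    by (rule eventually_pow_mult_entries_eq_0)
  then show ?thesis
  proof (rule eventually_mono)
    fix L assume L: "\<forall>i<n. \<forall>j<n. u ^ L * (M $$ (i, j) - (if i = j then u ^ k else 0)) = 0"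
    show "u ^ L \<cdot>\<^sub>m M = u ^ (L + k) \<cdot>\<^sub>m 1\<^sub>m n"
      by (rule eq_matI) (use M L in \<open>auto simp: right_diff_distrib power_add\<close>)
  qed
qed

lemma first_row_e1_eventually:
  fixes u :: "'a::comm_ring_1"
  assumes "first_row_e1 n u H k"
  shows "\<forall>\<^sub>F L in sequentially. \<forall>j<n. u ^ L * H $$ (0, j) = (if j = 0 then u ^ (L + k) else 0)"
proof -
  have "\<exists>l. u ^ l * (H $$ (0, j) - (if j = 0 then u ^ k else 0)) = 0" if j: "j < n" for j
  proof -
    obtain l where "u ^ l * (H $$ (0, j) * u ^ 0 - (if j = 0 then 1 else 0) * u ^ k) = 0"
      using assms j unfolding first_row_e1_def loc_eq_def by blast
    then show ?thesis by (intro exI[of _ l]) (cases "j = 0"; simp)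
  qed
  then have "\<forall>\<^sub>F L in sequentially. \<forall>i<n. \<forall>j<n.
      u ^ L * (H $$ (0, j) - (if j = 0 then u ^ k else 0)) = 0"
    by (intro eventually_pow_mult_entries_eq_0)
  then show ?thesis
    by (rule eventually_mono) (auto simp: right_diff_distrib power_add)
qed

lemma comaximal_power_left:
  fixes s t :: "'a::comm_ring_1"
  assumes "a * s + b * t = 1"
  shows "\<exists>x y. x * s ^ m + y * t = 1"
proof (induction m)
  case 0
  show ?case by (intro exI[of _ 1] exI[of _ 0]) simp
next
  case (Suc m)
  then obtain x y where xy: "x * s ^ m + y * t = 1" by blast
  have "1 = (x * s ^ m + y * t) * (a * s + b * t)" using xy assms by simp
  also have "\<dots> = (x * a) * s ^ Suc m + (x * s ^ m * b + y * a * s + y * b * t) * t"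
    by (simp add: algebra_simps)
  finally show ?case by metis
qed

lemma comaximal_powers:
  fixes s t :: "'a::comm_ring_1"
  assumes "a * s + b * t = 1"
  shows "\<exists>x y. x * s ^ m + y * t ^ n = 1"
proof -
  obtain x y where "y * t + x * s ^ m = 1" using comaximal_power_left[OF assms] by (metis add.commute)
  then obtain y' x' where "y' * t ^ n + x' * s ^ m = 1" using comaximal_power_left by blast
  then show ?thesis by (metis add.commute)
qed

section \<open>Evaluating polynomial matrices at a power of the other element\<close>

text \<open>For \<open>P\<close> over \<open>R[X]\<close> with constant term \<open>(x v)\<^sup>p I\<close>, \<open>eval_div_mat n x v e N p P\<close>
  is \<open>P(e v\<^sup>N) / v\<^sup>p\<close>, computed without division from \<open>P = (x v)\<^sup>p I + X \<cdot> poly_shift 1 P\<close>.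
  As a numerator over \<open>x\<^sup>p\<close> it represents \<open>P(e v\<^sup>N) / (x v)\<^sup>p\<close> over \<open>R\<^sub>x\<close>.\<close>

definition eval_div_mat :: "nat \<Rightarrow> 'a::comm_ring_1 \<Rightarrow> 'a \<Rightarrow> 'a \<Rightarrow> nat \<Rightarrow> nat \<Rightarrow> 'a poly mat \<Rightarrow> 'a mat"
  where "eval_div_mat n x v e N p P = mat n n (\<lambda>(i, j).
    (if i = j then x ^ p else 0) + e * v ^ (N - p) * poly (poly_shift 1 (P $$ (i, j))) (e * v ^ N))"

lemma eval_div_mat_carrier: "eval_div_mat n x v e N p P \<in> carrier_mat n n"
  by (simp add: eval_div_mat_def)

lemma dim_eval_div_mat [simp]:
  "dim_row (eval_div_mat n x v e N p P) = n" "dim_col (eval_div_mat n x v e N p P) = n"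
  by (simp_all add: eval_div_mat_def)

lemma index_eval_div_mat: "i < n \<Longrightarrow> j < n \<Longrightarrow> eval_div_mat n x v e N p P $$ (i, j) =
    (if i = j then x ^ p else 0) + e * v ^ (N - p) * poly (poly_shift 1 (P $$ (i, j))) (e * v ^ N)"
  by (simp add: eval_div_mat_def)

lemma eval_div_mat_scale:
  assumes P: "P \<in> carrier_mat n n"
    and P0: "\<And>i j. i < n \<Longrightarrow> j < n \<Longrightarrow> coeff (P $$ (i, j)) 0 = (if i = j then (x * v) ^ p else 0)"
    and "p \<le> N"
  shows "v ^ p \<cdot>\<^sub>m eval_div_mat n x v e N p P = map_mat (\<lambda>q. poly q (e * v ^ N)) P"
proof (rule eq_matI)
  fix i j assume "i < dim_row (map_mat (\<lambda>q. poly q (e * v ^ N)) P)"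
    "j < dim_col (map_mat (\<lambda>q. poly q (e * v ^ N)) P)"
  then have ij: "i < n" "j < n" using P by auto
  obtain r where r: "N = p + r" using \<open>p \<le> N\<close> le_Suc_ex by blast
  have "(v ^ p \<cdot>\<^sub>m eval_div_mat n x v e N p P) $$ (i, j)
      = (if i = j then (x * v) ^ p else 0) + e * v ^ N * poly (poly_shift 1 (P $$ (i, j))) (e * v ^ N)"
    using ij unfolding eval_div_mat_def r by (simp add: power_add power_mult_distrib algebra_simps)
  also have "\<dots> = poly (P $$ (i, j)) (e * v ^ N)"
    using P0[OF ij] by (subst (2) const_plus_pCons_poly_shift) simp
  finally show "(v ^ p \<cdot>\<^sub>m eval_div_mat n x v e N p P) $$ (i, j)
      = map_mat (\<lambda>q. poly q (e * v ^ N)) P $$ (i, j)"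
    using ij P by simp
qed (use P in auto)

lemma poly_shift_mult_scalar:
  fixes P Q :: "'a::comm_ring_1 poly mat"
  assumes P: "P \<in> carrier_mat n n" and Q: "Q \<in> carrier_mat n n"
    and P0: "\<And>i j. i < n \<Longrightarrow> j < n \<Longrightarrow> coeff (P $$ (i, j)) 0 = (if i = j then a else 0)"
    and Q0: "\<And>i j. i < n \<Longrightarrow> j < n \<Longrightarrow> coeff (Q $$ (i, j)) 0 = (if i = j then b else 0)"
    and PQ: "P * Q = [:a * b:] \<cdot>\<^sub>m 1\<^sub>m n"
    and ij: "i < n" "j < n"
  shows "smult a (poly_shift 1 (Q $$ (i, j))) + smult b (poly_shift 1 (P $$ (i, j)))
    + pCons 0 (\<Sum>k<n. poly_shift 1 (P $$ (i, k)) * poly_shift 1 (Q $$ (k, j))) = 0"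
    (is "?E = 0")
proof -
  define Ph where "Ph k l = poly_shift 1 (P $$ (k, l))" for k l
  define Qh where "Qh k l = poly_shift 1 (Q $$ (k, l))" for k l
  have P_split: "P $$ (k, l) = [:if k = l then a else 0:] + pCons 0 (Ph k l)" if "k < n" "l < n" for k l
    using const_plus_pCons_poly_shift[of "P $$ (k, l)"] P0[OF that] unfolding Ph_def by simp
  have Q_split: "Q $$ (k, l) = [:if k = l then b else 0:] + pCons 0 (Qh k l)" if "k < n" "l < n" for k l
    using const_plus_pCons_poly_shift[of "Q $$ (k, l)"] Q0[OF that] unfolding Qh_def by simp
  have "(P * Q) $$ (i, j) = (\<Sum>k<n. P $$ (i, k) * Q $$ (k, j))"
    using P Q ij by (rule index_mult_mat_sum)
  also have "\<dots> = (\<Sum>k<n. ((if i = k then [:a:] else 0) + pCons 0 (Ph i k))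
                         * ((if k = j then [:b:] else 0) + pCons 0 (Qh k j)))"
    using ij by (intro sum.cong refl) (simp add: P_split Q_split)
  also have "\<dots> = (if i = j then [:a:] * [:b:] else 0) + [:a:] * pCons 0 (Qh i j)
      + [:b:] * pCons 0 (Ph i j) + (\<Sum>k<n. pCons 0 (Ph i k) * pCons 0 (Qh k j))"
    by (rule sum_diagonal_plus_mult[OF ij])
  also have "(\<Sum>k<n. pCons 0 (Ph i k) * pCons 0 (Qh k j)) = pCons 0 (pCons 0 (\<Sum>k<n. Ph i k * Qh k j))"
    by (simp add: pCons_0_hom.hom_sum[symmetric] sum_distrib_left)
  finally have "(P * Q) $$ (i, j) = [:if i = j then a * b else 0:] + pCons 0 ?E"
    unfolding Ph_def Qh_def by simp
  then show "?E = 0" using PQ ij by (cases "i = j") (simp_all add: one_pCons)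
qed

lemma mult_eval_div_mat:
  fixes P Q :: "'a::comm_ring_1 poly mat"
  assumes P: "P \<in> carrier_mat n n" and Q: "Q \<in> carrier_mat n n"
    and P0: "\<And>i j. i < n \<Longrightarrow> j < n \<Longrightarrow> coeff (P $$ (i, j)) 0 = (if i = j then (x * v) ^ p else 0)"
    and Q0: "\<And>i j. i < n \<Longrightarrow> j < n \<Longrightarrow> coeff (Q $$ (i, j)) 0 = (if i = j then (x * v) ^ q else 0)"
    and PQ: "P * Q = [:(x * v) ^ (p + q):] \<cdot>\<^sub>m 1\<^sub>m n"
    and "p + q \<le> N"
  shows "eval_div_mat n x v e N p P * eval_div_mat n x v e N q Q = x ^ (p + q) \<cdot>\<^sub>m 1\<^sub>m n"
proof (rule eq_matI)
  fix i j assume "i < dim_row (x ^ (p + q) \<cdot>\<^sub>m 1\<^sub>m n)" "j < dim_col (x ^ (p + q) \<cdot>\<^sub>m 1\<^sub>m n)"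
  then have ij: "i < n" "j < n" by auto
  define w where "w = e * v ^ N"
  define Ph where "Ph k l = poly_shift 1 (P $$ (k, l))" for k l
  define Qh where "Qh k l = poly_shift 1 (Q $$ (k, l))" for k l
  have "smult ((x * v) ^ p) (Qh i j) + smult ((x * v) ^ q) (Ph i j) + pCons 0 (\<Sum>k<n. Ph i k * Qh k j) = 0"
    unfolding Ph_def Qh_def by (rule poly_shift_mult_scalar[OF P Q P0 Q0 PQ[unfolded power_add] ij])
  then have "poly (smult ((x * v) ^ p) (Qh i j) + smult ((x * v) ^ q) (Ph i j)
    + pCons 0 (\<Sum>k<n. Ph i k * Qh k j)) w = 0" by simp
  then have key: "(x * v) ^ p * poly (Qh i j) w + (x * v) ^ q * poly (Ph i j) w
      + w * (\<Sum>k<n. poly (Ph i k) w * poly (Qh k j) w) = 0"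
    by (simp add: poly_sum)
  obtain r where r: "N = p + q + r" using \<open>p + q \<le> N\<close> le_Suc_ex by blast
  have "(eval_div_mat n x v e N p P * eval_div_mat n x v e N q Q) $$ (i, j)
     = (\<Sum>k<n. eval_div_mat n x v e N p P $$ (i, k) * eval_div_mat n x v e N q Q $$ (k, j))"
    using ij by (intro index_mult_mat_sum[OF eval_div_mat_carrier eval_div_mat_carrier])
  also have "\<dots> = (\<Sum>k<n. ((if i = k then x ^ p else 0) + e * v ^ (N - p) * poly (Ph i k) w)
       * ((if k = j then x ^ q else 0) + e * v ^ (N - q) * poly (Qh k j) w))"
    using ij by (intro sum.cong refl) (simp add: index_eval_div_mat w_def Ph_def Qh_def)
  also have "\<dots> = (if i = j then x ^ p * x ^ q else 0)
      + x ^ p * (e * v ^ (N - q) * poly (Qh i j) w) + x ^ q * (e * v ^ (N - p) * poly (Ph i j) w)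
      + (\<Sum>k<n. e * v ^ (N - p) * poly (Ph i k) w * (e * v ^ (N - q) * poly (Qh k j) w))"
    by (rule sum_diagonal_plus_mult[OF ij])
  also have "(\<Sum>k<n. e * v ^ (N - p) * poly (Ph i k) w * (e * v ^ (N - q) * poly (Qh k j) w))
     = e * v ^ (N - p) * (e * v ^ (N - q)) * (\<Sum>k<n. poly (Ph i k) w * poly (Qh k j) w)"
    by (simp add: sum_distrib_left algebra_simps)
  finally have entry: "(eval_div_mat n x v e N p P * eval_div_mat n x v e N q Q) $$ (i, j)
      = (if i = j then x ^ (p + q) else 0) + (x ^ p * (e * v ^ (N - q) * poly (Qh i j) w)
        + x ^ q * (e * v ^ (N - p) * poly (Ph i j) w)
        + e * v ^ (N - p) * (e * v ^ (N - q)) * (\<Sum>k<n. poly (Ph i k) w * poly (Qh k j) w))"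
    by (simp add: power_add add.assoc)
  have "x ^ p * (e * v ^ (N - q) * poly (Qh i j) w) + x ^ q * (e * v ^ (N - p) * poly (Ph i j) w)
      + e * v ^ (N - p) * (e * v ^ (N - q)) * (\<Sum>k<n. poly (Ph i k) w * poly (Qh k j) w)
    = e * v ^ r * ((x * v) ^ p * poly (Qh i j) w + (x * v) ^ q * poly (Ph i j) w
      + w * (\<Sum>k<n. poly (Ph i k) w * poly (Qh k j) w))"
    unfolding r w_def by (simp add: power_add power_mult_distrib algebra_simps)
  then show "(eval_div_mat n x v e N p P * eval_div_mat n x v e N q Q) $$ (i, j)
      = (x ^ (p + q) \<cdot>\<^sub>m 1\<^sub>m n) $$ (i, j)"
    using ij key entry by simp
qed auto

lemma first_row_e1_eval_div_mat:
  assumes row: "\<And>j. j < n \<Longrightarrow> degree (smult ((x * v) ^ m) (P $$ (0, j))) = 0"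
    and "p + m \<le> N"
  shows "first_row_e1 n x (eval_div_mat n x v e N p P) p"
  unfolding first_row_e1_def loc_eq_def
proof (intro allI impI exI[of _ m])
  fix j assume j: "j < n"
  then have n0: "0 < n" by simp
  define w where "w = e * v ^ N"
  have "m \<le> N - p" using \<open>p + m \<le> N\<close> by simp
  then obtain r where r: "N - p = m + r" using le_Suc_ex by blast
  have "smult ((x * v) ^ m) (poly_shift 1 (P $$ (0, j))) = 0"
    using poly_shift_degree_0[OF row[OF j]] by (simp add: poly_shift_smult)
  then have killed: "(x * v) ^ m * poly (poly_shift 1 (P $$ (0, j))) w = 0"
    by (metis poly_0 poly_smult)
  have "x ^ m * (eval_div_mat n x v e N p P $$ (0, j) * x ^ 0 - (if j = 0 then 1 else 0) * x ^ p)
      = e * v ^ r * ((x * v) ^ m * poly (poly_shift 1 (P $$ (0, j))) w)"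
    unfolding index_eval_div_mat[OF n0 j] w_def r
    by (simp add: power_add power_mult_distrib algebra_simps)
  then show "x ^ m * (eval_div_mat n x v e N p P $$ (0, j) * x ^ 0 - (if j = 0 then 1 else 0) * x ^ p) = 0"
    using killed by simp
qed

section \<open>Homogenisation in a graded ring\<close>

locale graded =
  fixes G :: "nat \<Rightarrow> 'a::comm_ring_1 set"
  assumes graded: "graded_ring G"
begin

lemma G_zero: "0 \<in> G i"
  and G_add: "x \<in> G i \<Longrightarrow> y \<in> G i \<Longrightarrow> x + y \<in> G i"
  and G_mult: "x \<in> G i \<Longrightarrow> y \<in> G j \<Longrightarrow> x * y \<in> G (i + j)"
  and G_decomp: "\<exists>!f. (\<forall>i. f i \<in> G i) \<and> finite {i. f i \<noteq> 0} \<and> x = (\<Sum>i\<in>{i. f i \<noteq> 0}. f i)"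
  using graded unfolding graded_ring_def by blast+

lemma G_sum: "finite A \<Longrightarrow> (\<And>a. a \<in> A \<Longrightarrow> f a \<in> G i) \<Longrightarrow> sum f A \<in> G i"
  by (induction A rule: finite_induct) (auto intro: G_zero G_add)

definition graded_poly :: "'a poly \<Rightarrow> bool" where
  "graded_poly p \<longleftrightarrow> (\<forall>i. coeff p i \<in> G i)"

text \<open>A homogeneous decomposition \<open>x = \<Sum> x\<^sub>i\<close> is the same as a graded polynomial
  \<open>\<Sum> x\<^sub>i X\<^sup>i\<close> with value \<open>x\<close> at \<open>X = 1\<close>.\<close>

lemma graded_poly_ex1: "\<exists>!p. graded_poly p \<and> poly p 1 = x"
proof -
  obtain f where f: "\<forall>i. f i \<in> G i" "finite {i. f i \<noteq> 0}" "x = (\<Sum>i\<in>{i. f i \<noteq> 0}. f i)"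
    using G_decomp[of x] by blast
  define p where "p = Abs_poly f"
  have "\<forall>\<^sub>\<infinity> i. f i = 0" using f(2) by (simp add: MOST_iff_cofinite)
  then have coeff_p: "coeff p = f" unfolding p_def by (simp add: Abs_poly_inverse)
  have p: "graded_poly p \<and> poly p 1 = x"
    using f coeff_p by (simp add: graded_poly_def poly_1_eq_sum_coeffs)
  moreover have "q = p" if "graded_poly q \<and> poly q 1 = x" for q
  proof -
    have "coeff q = coeff p"
      using G_decomp[of x] that p unfolding graded_poly_def poly_1_eq_sum_coeffs
      by (metis finite_coeff_support)
    then show ?thesis by (simp add: poly_eq_iff)
  qed
  ultimately show ?thesis by blast
qed

definition grading_poly :: "'a \<Rightarrow> 'a poly" where
  "grading_poly x = (THE p. graded_poly p \<and> poly p 1 = x)"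

lemma graded_poly_grading_poly: "graded_poly (grading_poly x)"
  and poly_grading_poly_1: "poly (grading_poly x) 1 = x"
  using theI'[OF graded_poly_ex1[of x]] unfolding grading_poly_def by auto

lemma coeff_grading_poly: "coeff (grading_poly x) i \<in> G i"
  using graded_poly_grading_poly unfolding graded_poly_def by blast

lemma grading_poly_unique: "graded_poly p \<Longrightarrow> grading_poly (poly p 1) = p"
  using graded_poly_ex1[of "poly p 1"] graded_poly_grading_poly poly_grading_poly_1 by blast

lemma graded_poly_add: "graded_poly p \<Longrightarrow> graded_poly q \<Longrightarrow> graded_poly (p + q)"
  unfolding graded_poly_def by (auto intro: G_add)

lemma graded_poly_mult:
  assumes p: "graded_poly p" and q: "graded_poly q"
  shows "graded_poly (p * q)"
  unfolding graded_poly_def coeff_mult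
proof
  fix n
  have "coeff p i * coeff q (n - i) \<in> G n" if "i \<le> n" for i
    using G_mult[of "coeff p i" i "coeff q (n - i)" "n - i"] p q that
    unfolding graded_poly_def by simp
  then show "(\<Sum>i\<le>n. coeff p i * coeff q (n - i)) \<in> G n" by (intro G_sum) auto
qed

lemma grading_poly_add: "grading_poly (x + y) = grading_poly x + grading_poly y"
  using grading_poly_unique[OF graded_poly_add[OF graded_poly_grading_poly graded_poly_grading_poly]]
  by (simp add: poly_grading_poly_1)

lemma grading_poly_mult: "grading_poly (x * y) = grading_poly x * grading_poly y"
  using grading_poly_unique[OF graded_poly_mult[OF graded_poly_grading_poly graded_poly_grading_poly]]
  by (simp add: poly_grading_poly_1)

lemma grading_poly_homogeneous: "g \<in> G i \<Longrightarrow> grading_poly g = monom g i"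
  using grading_poly_unique[of "monom g i"]
  by (simp add: graded_poly_def coeff_monom G_zero poly_monom)

lemma grading_poly_0: "grading_poly 0 = 0"
  using grading_poly_homogeneous[OF G_zero[of 0]] by simp

text \<open>The grading need not declare \<open>1 \<in> G 0\<close>: it follows since \<open>e = grading_poly 1\<close>
  is a multiplicative unit for every \<open>monom g i\<close>.\<close>

lemma one_in_G0: "1 \<in> G 0"
proof -
  define e where "e = grading_poly 1"
  have unit: "g * coeff e j = (if j = 0 then g else 0)" if g: "g \<in> G i" for g i j
  proof -
    have "monom g i = monom g i * e"
      unfolding e_def using grading_poly_mult[of g 1] grading_poly_homogeneous[OF g] by simp
    then have "coeff (monom g i) (i + j) = coeff (monom g i * e) (i + j)" by simp
    then show ?thesis by (simp add: coeff_monom_mult)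
  qed
  have "coeff e j = 0" if "j > 0" for j
  proof -
    have "coeff e j * coeff e 0 = coeff e j"
      using unit[OF coeff_grading_poly[of 1 j, folded e_def], of 0] by simp
    moreover have "coeff e 0 * coeff e j = 0"
      using unit[OF coeff_grading_poly[of 1 0, folded e_def], of j] that by simp
    ultimately show ?thesis by (simp add: mult.commute)
  qed
  then have "e = [:coeff e 0:]"
    by (intro poly_eqI) (auto simp: coeff_pCons split: nat.split)
  then have "coeff e 0 = 1"
    using poly_grading_poly_1[of 1] unfolding e_def by (metis poly_const_conv)
  then show ?thesis using coeff_grading_poly[of 1 0] unfolding e_def by simp
qed

lemma grading_poly_G0: "c \<in> G 0 \<Longrightarrow> grading_poly c = [:c:]"
  using grading_poly_homogeneous[of c 0] by (simp add: monom_0)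

lemma G0_mult: "x \<in> G 0 \<Longrightarrow> y \<in> G 0 \<Longrightarrow> x * y \<in> G 0"
  using G_mult[of x 0 y 0] by simp

lemma G0_power: "x \<in> G 0 \<Longrightarrow> x ^ m \<in> G 0"
  by (induction m) (auto intro: one_in_G0 G0_mult)

lemma grading_poly_hom: "comm_ring_hom grading_poly"
  by unfold_locales
    (auto simp: grading_poly_add grading_poly_mult grading_poly_G0[OF one_in_G0] grading_poly_0)

definition grading_eval :: "'a \<Rightarrow> 'a \<Rightarrow> 'a" where
  "grading_eval l x = poly (grading_poly x) l"

abbreviation deg0 :: "'a \<Rightarrow> 'a" where
  "deg0 \<equiv> grading_eval 0"

definition grading_shift :: "'a \<Rightarrow> 'a \<Rightarrow> 'a poly" where
  "grading_shift l x = pcompose (grading_poly x) [:l, 1:]"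

lemma grading_eval_hom: "comm_ring_hom (grading_eval l)"
proof -
  interpret comm_ring_hom grading_poly by (rule grading_poly_hom)
  show ?thesis by unfold_locales (simp_all add: grading_eval_def hom_distribs)
qed

lemma grading_shift_hom: "comm_ring_hom (grading_shift l)"
proof -
  interpret comm_ring_hom grading_poly by (rule grading_poly_hom)
  show ?thesis
    by unfold_locales (simp_all add: grading_shift_def hom_distribs pcompose_add pcompose_mult)
qed

lemma grading_eval_G0: "c \<in> G 0 \<Longrightarrow> grading_eval l c = c"
  by (simp add: grading_eval_def grading_poly_G0)

lemma grading_shift_G0: "c \<in> G 0 \<Longrightarrow> grading_shift l c = [:c:]"
  by (simp add: grading_shift_def grading_poly_G0)

lemma grading_eval_1: "grading_eval 1 x = x"
  by (simp add: grading_eval_def poly_grading_poly_1)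

lemma poly_grading_shift: "poly (grading_shift l x) m = grading_eval (l + m) x"
  by (simp add: grading_shift_def grading_eval_def poly_pcompose)

lemma deg0_homogeneous: "g \<in> G i \<Longrightarrow> deg0 g = (if i = 0 then g else 0)"
  by (auto simp: grading_eval_def grading_poly_homogeneous poly_monom zero_power)

lemma coeff_0_grading_poly: "coeff (grading_poly x) 0 = deg0 x"
  by (simp add: grading_eval_def poly_0_coeff_0)

lemma map_deg0_grading_poly: "map_poly deg0 (grading_poly x) = [:deg0 x:]"
proof (rule poly_eqI)
  fix i
  have "coeff (map_poly deg0 (grading_poly x)) i = deg0 (coeff (grading_poly x) i)"
    using deg0_homogeneous[OF G_zero[of 0]] by (simp add: coeff_map_poly)
  also have "\<dots> = coeff [:deg0 x:] i"
    using deg0_homogeneous[OF coeff_grading_poly[of x i]]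
    by (cases i) (auto simp: grading_eval_def poly_0_coeff_0)
  finally show "coeff (map_poly deg0 (grading_poly x)) i = coeff [:deg0 x:] i" .
qed

lemma map_deg0_grading_shift: "map_poly deg0 (grading_shift l x) = [:deg0 x:]"
proof -
  interpret comm_ring_hom deg0 by (rule grading_eval_hom)
  show ?thesis unfolding grading_shift_def map_poly_pcompose map_deg0_grading_poly by simp
qed

lemma R_plus_iff_deg0: "x \<in> R_plus G \<longleftrightarrow> deg0 x = 0"
proof
  interpret comm_ring_hom deg0 by (rule grading_eval_hom)
  assume "x \<in> R_plus G"
  then obtain N f where f: "\<forall>i. f i \<in> G i" "x = (\<Sum>i\<in>{1..N}. f i)"
    unfolding R_plus_def by blast
  have "deg0 x = (\<Sum>i\<in>{1..N}. deg0 (f i))" unfolding f(2) by (simp add: hom_sum)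
  also have "\<dots> = 0" by (intro sum.neutral ballI) (simp add: deg0_homogeneous[OF f(1)[rule_format]])
  finally show "deg0 x = 0" .
next
  assume deg0: "deg0 x = 0"
  have "x = (\<Sum>i\<le>degree (grading_poly x). coeff (grading_poly x) i)"
    using poly_grading_poly_1[of x] by (simp add: poly_altdef[of _ 1])
  also have "\<dots> = coeff (grading_poly x) 0 + (\<Sum>i\<in>{1..degree (grading_poly x)}. coeff (grading_poly x) i)"
    by (simp add: atMost_atLeast0 sum.atLeast_Suc_atMost)
  also have "coeff (grading_poly x) 0 = 0" using deg0 by (simp add: grading_eval_def poly_0_coeff_0)
  finally show "x \<in> R_plus G" unfolding R_plus_def using coeff_grading_poly by auto
qed

lemma loc_mem_R_plus_deg0:
  assumes "u \<in> G 0" and "loc_mem u (R_plus G) a k"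
  shows "\<exists>l. u ^ l * deg0 a = 0"
proof -
  interpret d: comm_ring_hom deg0 by (rule grading_eval_hom)
  obtain b m l where b: "b \<in> R_plus G" and eq: "u ^ l * (a * u ^ m - b * u ^ k) = 0"
    using assms(2) unfolding loc_mem_def loc_eq_def by blast
  have "deg0 (u ^ l * (a * u ^ m - b * u ^ k)) = u ^ (l + m) * deg0 a"
    using b \<open>u \<in> G 0\<close> by (simp add: R_plus_iff_deg0 d.hom_mult d.hom_minus grading_eval_G0
        G0_power power_add ac_simps)
  then show ?thesis using eq by auto
qed

lemma lGL_deg0_eventually:
  assumes "u \<in> G 0" and H: "lGL n u (R_plus G) H k"
  shows "\<forall>\<^sub>F L in sequentially. u ^ L \<cdot>\<^sub>m map_mat deg0 H = u ^ (L + k) \<cdot>\<^sub>m 1\<^sub>m n"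
proof -
  interpret d: comm_ring_hom deg0 by (rule grading_eval_hom)
  have "\<exists>l. u ^ l * (deg0 (H $$ (i, j)) - (if i = j then u ^ k else 0)) = 0" if ij: "i < n" "j < n" for i j
  proof -
    have "loc_mem u (R_plus G) (H $$ (i, j) - (if i = j then u ^ k else 0)) k"
      using H ij unfolding lGL_def by blast
    moreover have "deg0 (H $$ (i, j) - (if i = j then u ^ k else 0))
        = deg0 (H $$ (i, j)) - (if i = j then u ^ k else 0)"
      using \<open>u \<in> G 0\<close> by (simp add: d.hom_minus grading_eval_G0 G0_power)
    ultimately show ?thesis using loc_mem_R_plus_deg0[OF \<open>u \<in> G 0\<close>] by metis
  qed
  then have "\<forall>\<^sub>F L in sequentially. \<forall>i<n. \<forall>j<n.
      u ^ L * (deg0 (H $$ (i, j)) - (if i = j then u ^ k else 0)) = 0"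
    by (rule eventually_pow_mult_entries_eq_0)
  then show ?thesis
  proof (rule eventually_mono)
    fix L assume "\<forall>i<n. \<forall>j<n. u ^ L * (deg0 (H $$ (i, j)) - (if i = j then u ^ k else 0)) = 0"
    then show "u ^ L \<cdot>\<^sub>m map_mat deg0 H = u ^ (L + k) \<cdot>\<^sub>m 1\<^sub>m n"
      using H unfolding lGL_def
      by (intro eq_matI) (auto simp: right_diff_distrib power_add)
  qed
qed

lemma deg0_scalar_inverse:
  assumes "u \<in> G 0" and H: "H \<in> carrier_mat n n" and B: "B \<in> carrier_mat n n"
    and HB: "H * B = u ^ (K + m) \<cdot>\<^sub>m 1\<^sub>m n" and BH: "B * H = u ^ (K + m) \<cdot>\<^sub>m 1\<^sub>m n"
    and H0: "map_mat deg0 H = u ^ K \<cdot>\<^sub>m 1\<^sub>m n"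
  shows "H * (u ^ K \<cdot>\<^sub>m B) = u ^ (K + (K + m)) \<cdot>\<^sub>m 1\<^sub>m n"
    "(u ^ K \<cdot>\<^sub>m B) * H = u ^ (K + (K + m)) \<cdot>\<^sub>m 1\<^sub>m n"
    "map_mat deg0 (u ^ K \<cdot>\<^sub>m B) = u ^ (K + m) \<cdot>\<^sub>m 1\<^sub>m n"
proof -
  interpret d: comm_ring_hom deg0 by (rule grading_eval_hom)
  show "H * (u ^ K \<cdot>\<^sub>m B) = u ^ (K + (K + m)) \<cdot>\<^sub>m 1\<^sub>m n"
    unfolding mult_smult_distrib[OF H B] HB by (auto intro!: eq_matI simp: power_add)
  show "(u ^ K \<cdot>\<^sub>m B) * H = u ^ (K + (K + m)) \<cdot>\<^sub>m 1\<^sub>m n"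
    unfolding mult_smult_assoc_mat[OF B H] BH by (auto intro!: eq_matI simp: power_add)
  have uK: "deg0 (u ^ K) = u ^ K" using \<open>u \<in> G 0\<close> by (simp add: grading_eval_G0 G0_power)
  have "map_mat deg0 (u ^ K \<cdot>\<^sub>m B) = u ^ K \<cdot>\<^sub>m map_mat deg0 B"
    using B uK by (auto intro!: eq_matI simp: d.hom_mult)
  also have "\<dots> = map_mat deg0 H * map_mat deg0 B"
    unfolding H0 using B by (simp add: mult_smult_assoc_mat[of "1\<^sub>m n" n n])
  also have "\<dots> = map_mat deg0 (H * B)" by (rule d.mat_hom_mult[OF H B, symmetric])
  also have "\<dots> = u ^ (K + m) \<cdot>\<^sub>m 1\<^sub>m n" unfolding HB d.mat_hom_smult_one using \<open>u \<in> G 0\<close>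
    by (simp add: grading_eval_G0 G0_power)
  finally show "map_mat deg0 (u ^ K \<cdot>\<^sub>m B) = u ^ (K + m) \<cdot>\<^sub>m 1\<^sub>m n" .
qed

lemma clear_denominators:
  assumes u: "u \<in> G 0" and H: "lGL n u (R_plus G) H k" and row: "first_row_e1 n u H k"
  obtains B c m where "B \<in> carrier_mat n n"
    "(u ^ c \<cdot>\<^sub>m H) * B = u ^ (k + c + m) \<cdot>\<^sub>m 1\<^sub>m n" "B * (u ^ c \<cdot>\<^sub>m H) = u ^ (k + c + m) \<cdot>\<^sub>m 1\<^sub>m n"
    "map_mat deg0 (u ^ c \<cdot>\<^sub>m H) = u ^ (k + c) \<cdot>\<^sub>m 1\<^sub>m n"
    "\<And>j. j < n \<Longrightarrow> (u ^ c \<cdot>\<^sub>m H) $$ (0, j) = (if j = 0 then u ^ (k + c) else 0)"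
proof -
  interpret d: comm_ring_hom deg0 by (rule grading_eval_hom)
  have Hc: "H \<in> carrier_mat n n" using H unfolding lGL_def by blast
  obtain B m where B: "B \<in> carrier_mat n n"
    and HB: "lmat_eq n u (H * B) (k + m) (1\<^sub>m n) 0" and BH: "lmat_eq n u (B * H) (k + m) (1\<^sub>m n) 0"
    using H unfolding lGL_def by blast
  have "\<forall>\<^sub>F c in sequentially. (u ^ c \<cdot>\<^sub>m (H * B) = u ^ (c + (k + m)) \<cdot>\<^sub>m 1\<^sub>m n
      \<and> u ^ c \<cdot>\<^sub>m (B * H) = u ^ (c + (k + m)) \<cdot>\<^sub>m 1\<^sub>m n)
      \<and> u ^ c \<cdot>\<^sub>m map_mat deg0 H = u ^ (c + k) \<cdot>\<^sub>m 1\<^sub>m n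
      \<and> (\<forall>j<n. u ^ c * H $$ (0, j) = (if j = 0 then u ^ (c + k) else 0))"
    using lmat_eq_one_eventually[OF mult_carrier_mat[OF Hc B] HB]
      lmat_eq_one_eventually[OF mult_carrier_mat[OF B Hc] BH]
      lGL_deg0_eventually[OF u H] first_row_e1_eventually[OF row]
    by (intro eventually_conj)
  then obtain c where c: "u ^ c \<cdot>\<^sub>m (H * B) = u ^ (c + (k + m)) \<cdot>\<^sub>m 1\<^sub>m n"
    "u ^ c \<cdot>\<^sub>m (B * H) = u ^ (c + (k + m)) \<cdot>\<^sub>m 1\<^sub>m n"
    "u ^ c \<cdot>\<^sub>m map_mat deg0 H = u ^ (c + k) \<cdot>\<^sub>m 1\<^sub>m n"
    "\<And>j. j < n \<Longrightarrow> u ^ c * H $$ (0, j) = (if j = 0 then u ^ (c + k) else 0)"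
    unfolding eventually_sequentially by blast
  have uc: "deg0 (u ^ c) = u ^ c" using u by (simp add: grading_eval_G0 G0_power)
  show thesis
  proof (rule that)
    show "B \<in> carrier_mat n n" by (fact B)
    show "(u ^ c \<cdot>\<^sub>m H) * B = u ^ (k + c + m) \<cdot>\<^sub>m 1\<^sub>m n"
      using mult_smult_assoc_mat[OF Hc B] c(1) by (simp add: ac_simps)
    show "B * (u ^ c \<cdot>\<^sub>m H) = u ^ (k + c + m) \<cdot>\<^sub>m 1\<^sub>m n"
      using mult_smult_distrib[OF B Hc] c(2) by (simp add: ac_simps)
    have "map_mat deg0 (u ^ c \<cdot>\<^sub>m H) = u ^ c \<cdot>\<^sub>m map_mat deg0 H"
      using Hc uc by (auto intro!: eq_matI simp: d.hom_mult)
    then show "map_mat deg0 (u ^ c \<cdot>\<^sub>m H) = u ^ (k + c) \<cdot>\<^sub>m 1\<^sub>m n"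
      using c(3) by (simp add: add.commute)
    show "(u ^ c \<cdot>\<^sub>m H) $$ (0, j) = (if j = 0 then u ^ (k + c) else 0)" if "j < n" for j
      using c(4)[OF that] Hc that by (simp add: add.commute)
  qed
qed

lemma integral_representative:
  assumes u: "u \<in> G 0" and H: "lGL n u (R_plus G) H k" and row: "first_row_e1 n u H k"
  obtains B c J where "B \<in> carrier_mat n n"
    "(u ^ c \<cdot>\<^sub>m H) * B = u ^ (k + c + J) \<cdot>\<^sub>m 1\<^sub>m n" "B * (u ^ c \<cdot>\<^sub>m H) = u ^ (k + c + J) \<cdot>\<^sub>m 1\<^sub>m n"
    "map_mat deg0 (u ^ c \<cdot>\<^sub>m H) = u ^ (k + c) \<cdot>\<^sub>m 1\<^sub>m n" "map_mat deg0 B = u ^ J \<cdot>\<^sub>m 1\<^sub>m n"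
    "\<And>j. j < n \<Longrightarrow> (u ^ c \<cdot>\<^sub>m H) $$ (0, j) = (if j = 0 then u ^ (k + c) else 0)"
proof -
  obtain B c m where B: "B \<in> carrier_mat n n"
    and HB: "(u ^ c \<cdot>\<^sub>m H) * B = u ^ (k + c + m) \<cdot>\<^sub>m 1\<^sub>m n"
    and BH: "B * (u ^ c \<cdot>\<^sub>m H) = u ^ (k + c + m) \<cdot>\<^sub>m 1\<^sub>m n"
    and H0: "map_mat deg0 (u ^ c \<cdot>\<^sub>m H) = u ^ (k + c) \<cdot>\<^sub>m 1\<^sub>m n"
    and H_row: "\<And>j. j < n \<Longrightarrow> (u ^ c \<cdot>\<^sub>m H) $$ (0, j) = (if j = 0 then u ^ (k + c) else 0)"
    using clear_denominators[OF u H row] by blast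
  have "u ^ c \<cdot>\<^sub>m H \<in> carrier_mat n n" using H unfolding lGL_def by simp
  note scaled = deg0_scalar_inverse[OF u this B HB BH H0]
  show thesis
    by (rule that[OF _ scaled(1,2) H0 scaled(3) H_row]) (use B in simp)
qed

lemma eval_div_mat_lGL:
  fixes P Q :: "'a poly mat"
  assumes P: "P \<in> carrier_mat n n" and Q: "Q \<in> carrier_mat n n"
    and P0: "\<And>i j. i < n \<Longrightarrow> j < n \<Longrightarrow> coeff (P $$ (i, j)) 0 = (if i = j then (x * v) ^ p else 0)"
    and Q0: "\<And>i j. i < n \<Longrightarrow> j < n \<Longrightarrow> coeff (Q $$ (i, j)) 0 = (if i = j then (x * v) ^ q else 0)"
    and PQ: "P * Q = [:(x * v) ^ (p + q):] \<cdot>\<^sub>m 1\<^sub>m n"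
    and QP: "Q * P = [:(x * v) ^ (p + q):] \<cdot>\<^sub>m 1\<^sub>m n"
    and "p + q \<le> N"
    and P_deg0: "\<And>i j. i < n \<Longrightarrow> j < n \<Longrightarrow> degree (map_poly deg0 (P $$ (i, j))) = 0"
  shows "lGL n x (R_plus G) (eval_div_mat n x v e N p P) p"
proof (rule lGL_if_scalar_inverse)
  show "eval_div_mat n x v e N p P * eval_div_mat n x v e N q Q = x ^ (p + q) \<cdot>\<^sub>m 1\<^sub>m n"
    by (rule mult_eval_div_mat[OF P Q P0 Q0 PQ \<open>p + q \<le> N\<close>])
  show "eval_div_mat n x v e N q Q * eval_div_mat n x v e N p P = x ^ (p + q) \<cdot>\<^sub>m 1\<^sub>m n"
    using mult_eval_div_mat[OF Q P Q0 P0] QP \<open>p + q \<le> N\<close> by (simp add: add.commute)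
next
  interpret d: comm_ring_hom deg0 by (rule grading_eval_hom)
  fix i j assume ij: "i < n" "j < n"
  have "deg0 (poly (poly_shift 1 (P $$ (i, j))) (e * v ^ N))
      = poly (poly_shift 1 (map_poly deg0 (P $$ (i, j)))) (deg0 (e * v ^ N))"
    unfolding map_poly_poly_shift[where f = deg0, OF d.hom_zero, symmetric]
    by (rule d.poly_map_poly[symmetric])
  also have "\<dots> = 0" using poly_shift_degree_0[OF P_deg0[OF ij]] by simp
  finally show "eval_div_mat n x v e N p P $$ (i, j) - (if i = j then x ^ p else 0) \<in> R_plus G"
    unfolding R_plus_iff_deg0 using ij by (simp add: index_eval_div_mat d.hom_mult)
qed (simp_all add: eval_div_mat_carrier)

lemma first_patch_factor:
  fixes H B :: "'a mat" and b :: 'a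
  assumes st: "s \<in> G 0" "t \<in> G 0" and "K + J \<le> N"
    and H: "H \<in> carrier_mat n n" and B: "B \<in> carrier_mat n n"
    and HB: "H * B = (s * t) ^ (K + J) \<cdot>\<^sub>m 1\<^sub>m n" and BH: "B * H = (s * t) ^ (K + J) \<cdot>\<^sub>m 1\<^sub>m n"
    and H0: "map_mat deg0 H = (s * t) ^ K \<cdot>\<^sub>m 1\<^sub>m n" and B0: "map_mat deg0 B = (s * t) ^ J \<cdot>\<^sub>m 1\<^sub>m n"
    and row: "\<And>j. j < n \<Longrightarrow> H $$ (0, j) = (if j = 0 then (s * t) ^ K else 0)"
  defines "A \<equiv> eval_div_mat n s t b N K (map_mat grading_poly H)"
  shows "lGL n s (R_plus G) A K" "first_row_e1 n s A K"
    "t ^ K \<cdot>\<^sub>m A = map_mat (grading_eval (b * t ^ N)) H"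
proof -
  interpret hp: comm_ring_hom grading_poly by (rule grading_poly_hom)
  define P where "P = map_mat grading_poly H"
  define Q where "Q = map_mat grading_poly B"
  have P: "P \<in> carrier_mat n n" and Q: "Q \<in> carrier_mat n n"
    using H B by (simp_all add: P_def Q_def)
  have const_term: "coeff (map_mat grading_poly M $$ (i, j)) 0 = (if i = j then (s * t) ^ k else 0)"
    if "M \<in> carrier_mat n n" "map_mat deg0 M = (s * t) ^ k \<cdot>\<^sub>m 1\<^sub>m n" "i < n" "j < n" for M k i j
  proof -
    have "map_mat deg0 M $$ (i, j) = ((s * t) ^ k \<cdot>\<^sub>m 1\<^sub>m n) $$ (i, j)" using that(2) by simp
    then show ?thesis using that(1,3,4) by (simp add: coeff_0_grading_poly)
  qed
  have uG: "(s * t) ^ (K + J) \<in> G 0" by (intro G0_power G0_mult st)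
  have scalar: "map_mat grading_poly ((s * t) ^ (K + J) \<cdot>\<^sub>m 1\<^sub>m n) = [:(s * t) ^ (K + J):] \<cdot>\<^sub>m 1\<^sub>m n"
    by (simp add: hp.mat_hom_smult_one grading_poly_G0[OF uG])
  have PQ: "P * Q = [:(s * t) ^ (K + J):] \<cdot>\<^sub>m 1\<^sub>m n"
    unfolding P_def Q_def hp.mat_hom_mult[OF H B, symmetric] HB scalar ..
  have QP: "Q * P = [:(s * t) ^ (K + J):] \<cdot>\<^sub>m 1\<^sub>m n"
    unfolding P_def Q_def hp.mat_hom_mult[OF B H, symmetric] BH scalar ..
  show "lGL n s (R_plus G) A K"
    unfolding A_def P_def[symmetric]
  proof (rule eval_div_mat_lGL[OF P Q _ _ PQ QP \<open>K + J \<le> N\<close>])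
    fix i j assume ij: "i < n" "j < n"
    show "coeff (P $$ (i, j)) 0 = (if i = j then (s * t) ^ K else 0)"
      unfolding P_def by (rule const_term[OF H H0 ij])
    show "coeff (Q $$ (i, j)) 0 = (if i = j then (s * t) ^ J else 0)"
      unfolding Q_def by (rule const_term[OF B B0 ij])
    show "degree (map_poly deg0 (P $$ (i, j))) = 0"
      using H ij by (simp add: P_def map_deg0_grading_poly)
  qed
  have "degree (smult ((s * t) ^ 0) (P $$ (0, j))) = 0" if "j < n" for j
    using H that row[OF that] by (simp add: P_def grading_poly_G0 G0_power G0_mult st grading_poly_0)
  moreover have "K + 0 \<le> N" using \<open>K + J \<le> N\<close> by simp
  ultimately show "first_row_e1 n s A K"
    unfolding A_def P_def[symmetric] by (rule first_row_e1_eval_div_mat)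
  have "t ^ K \<cdot>\<^sub>m A = map_mat (\<lambda>q. poly q (b * t ^ N)) P"
    unfolding A_def P_def[symmetric]
    by (rule eval_div_mat_scale[OF P]) (use const_term[OF H H0] \<open>K + J \<le> N\<close> in \<open>simp_all add: P_def\<close>)
  also have "\<dots> = map_mat (grading_eval (b * t ^ N)) H"
    using H by (auto simp: P_def grading_eval_def)
  finally show "t ^ K \<cdot>\<^sub>m A = map_mat (grading_eval (b * t ^ N)) H" .
qed

text \<open>\<open>P(X) = B(l) H(l + X)\<close> interpolates between \<open>P(0) = c I\<close> and \<open>P(1 - l) = B(l) H\<close>;
  it is inverted up to \<open>c\<^sup>2\<close> by \<open>Q(X) = B(l + X) H(l)\<close>.\<close>

lemma grading_twist_eval:
  fixes H B :: "'a mat" and l z :: 'a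
  assumes H: "H \<in> carrier_mat n n" and B: "B \<in> carrier_mat n n"
  shows "map_mat (\<lambda>q. poly q z) (map_mat (\<lambda>y. [:y:]) (map_mat (grading_eval l) B)
      * map_mat (grading_shift l) H) = map_mat (grading_eval l) B * map_mat (grading_eval (l + z)) H"
    "map_mat (\<lambda>q. poly q z) (map_mat (grading_shift l) B
      * map_mat (\<lambda>y. [:y:]) (map_mat (grading_eval l) H)) = map_mat (grading_eval (l + z)) B * map_mat (grading_eval l) H"
proof -
  have ev: "semiring_hom (\<lambda>q::'a poly. poly q z)" by unfold_locales auto
  have const: "map_mat (\<lambda>q. poly q z) (map_mat (\<lambda>y. [:y:]) M) = M" for M :: "'a mat"
    by (rule eq_matI) auto
  have shift: "map_mat (\<lambda>q. poly q z) (map_mat (grading_shift l) M) = map_mat (grading_eval (l + z)) M"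
    for M :: "'a mat" by (rule eq_matI) (auto simp: poly_grading_shift)
  show "map_mat (\<lambda>q. poly q z) (map_mat (\<lambda>y. [:y:]) (map_mat (grading_eval l) B)
      * map_mat (grading_shift l) H) = map_mat (grading_eval l) B * map_mat (grading_eval (l + z)) H"
    using H B by (simp add: semiring_hom.mat_hom_mult[OF ev, of _ n n _ n] const shift)
  show "map_mat (\<lambda>q. poly q z) (map_mat (grading_shift l) B
      * map_mat (\<lambda>y. [:y:]) (map_mat (grading_eval l) H)) = map_mat (grading_eval (l + z)) B * map_mat (grading_eval l) H"
    using H B by (simp add: semiring_hom.mat_hom_mult[OF ev, of _ n n _ n] const shift)
qed

lemma grading_twist_inverse:
  fixes H B :: "'a mat" and l :: 'a
  assumes H: "H \<in> carrier_mat n n" and B: "B \<in> carrier_mat n n" and "c \<in> G 0"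
    and HB: "H * B = c \<cdot>\<^sub>m 1\<^sub>m n" and BH: "B * H = c \<cdot>\<^sub>m 1\<^sub>m n"
  defines "P \<equiv> map_mat (\<lambda>y. [:y:]) (map_mat (grading_eval l) B) * map_mat (grading_shift l) H"
    and "Q \<equiv> map_mat (grading_shift l) B * map_mat (\<lambda>y. [:y:]) (map_mat (grading_eval l) H)"
  shows "P * Q = [:c * c:] \<cdot>\<^sub>m 1\<^sub>m n" "Q * P = [:c * c:] \<cdot>\<^sub>m 1\<^sub>m n"
    "map_mat (\<lambda>q. poly q 0) P = c \<cdot>\<^sub>m 1\<^sub>m n" "map_mat (\<lambda>q. poly q 0) Q = c \<cdot>\<^sub>m 1\<^sub>m n"
proof -
  interpret ev: comm_ring_hom "grading_eval l" by (rule grading_eval_hom)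
  interpret sh: comm_ring_hom "grading_shift l" by (rule grading_shift_hom)
  interpret cst: comm_ring_hom "\<lambda>y::'a. [:y:]" by (rule const_poly_hom)
  define Hl Bl Hs Bs where "Hl = map_mat (grading_eval l) H" and "Bl = map_mat (grading_eval l) B"
    and "Hs = map_mat (grading_shift l) H" and "Bs = map_mat (grading_shift l) B"
  have carriers: "Hl \<in> carrier_mat n n" "Bl \<in> carrier_mat n n" "Hs \<in> carrier_mat n n"
    "Bs \<in> carrier_mat n n" using H B by (simp_all add: Hl_def Bl_def Hs_def Bs_def)
  have HlBl: "Hl * Bl = c \<cdot>\<^sub>m 1\<^sub>m n" and BlHl: "Bl * Hl = c \<cdot>\<^sub>m 1\<^sub>m n"
    unfolding Hl_def Bl_def ev.mat_hom_mult[OF H B, symmetric] ev.mat_hom_mult[OF B H, symmetric]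
      HB BH ev.mat_hom_smult_one grading_eval_G0[OF \<open>c \<in> G 0\<close>] by simp_all
  have HsBs: "Hs * Bs = [:c:] \<cdot>\<^sub>m 1\<^sub>m n" and BsHs: "Bs * Hs = [:c:] \<cdot>\<^sub>m 1\<^sub>m n"
    unfolding Hs_def Bs_def sh.mat_hom_mult[OF H B, symmetric] sh.mat_hom_mult[OF B H, symmetric]
      HB BH sh.mat_hom_smult_one grading_shift_G0[OF \<open>c \<in> G 0\<close>] by simp_all
  have cHcB: "map_mat (\<lambda>y. [:y:]) Hl * map_mat (\<lambda>y. [:y:]) Bl = [:c:] \<cdot>\<^sub>m 1\<^sub>m n"
    and cBcH: "map_mat (\<lambda>y. [:y:]) Bl * map_mat (\<lambda>y. [:y:]) Hl = [:c:] \<cdot>\<^sub>m 1\<^sub>m n"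
    unfolding cst.mat_hom_mult[OF carriers(1,2), symmetric] cst.mat_hom_mult[OF carriers(2,1), symmetric]
      HlBl BlHl cst.mat_hom_smult_one by simp_all
  show "P * Q = [:c * c:] \<cdot>\<^sub>m 1\<^sub>m n"
    unfolding P_def Q_def Bl_def[symmetric] Hl_def[symmetric] Hs_def[symmetric] Bs_def[symmetric]
    using mult_scalar_sandwich[OF _ carriers(3,4) _ HsBs cBcH] carriers by simp
  show "Q * P = [:c * c:] \<cdot>\<^sub>m 1\<^sub>m n"
    unfolding P_def Q_def Bl_def[symmetric] Hl_def[symmetric] Hs_def[symmetric] Bs_def[symmetric]
    using mult_scalar_sandwich[OF carriers(4) _ _ carriers(3) cHcB BsHs] carriers by simp
  show "map_mat (\<lambda>q. poly q 0) P = c \<cdot>\<^sub>m 1\<^sub>m n" "map_mat (\<lambda>q. poly q 0) Q = c \<cdot>\<^sub>m 1\<^sub>m n"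
    unfolding P_def Q_def grading_twist_eval[OF H B] using BlHl by (simp_all add: Bl_def Hl_def)
qed

lemma grading_twist_first_row:
  fixes H B :: "'a mat" and l :: 'a
  assumes H: "H \<in> carrier_mat n n" and B: "B \<in> carrier_mat n n" and "c \<in> G 0" "d \<in> G 0"
    and HB: "H * B = c \<cdot>\<^sub>m 1\<^sub>m n"
    and row: "\<And>j. j < n \<Longrightarrow> H $$ (0, j) = (if j = 0 then d else 0)" and "j < n"
  shows "degree (smult d ((map_mat (\<lambda>y. [:y:]) (map_mat (grading_eval l) B)
    * map_mat (grading_shift l) H) $$ (0, j))) = 0"
proof -
  interpret ev: comm_ring_hom "grading_eval l" by (rule grading_eval_hom)
  have n0: "0 < n" using \<open>j < n\<close> by simp
  have B_row: "d * grading_eval l (B $$ (0, k)) = (if k = 0 then c else 0)" if "k < n" for k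
  proof -
    have "(if k = 0 then c else 0) = (H * B) $$ (0, k)" using HB n0 that by simp
    also have "\<dots> = (\<Sum>m<n. H $$ (0, m) * B $$ (m, k))" by (rule index_mult_mat_sum[OF H B n0 that])
    also have "\<dots> = (\<Sum>m<n. if m = 0 then d * B $$ (m, k) else 0)"
      by (intro sum.cong refl) (simp add: row)
    also have "\<dots> = d * B $$ (0, k)" using n0 by simp
    finally have "grading_eval l (d * B $$ (0, k)) = grading_eval l (if k = 0 then c else 0)" by simp
    then show ?thesis using \<open>c \<in> G 0\<close> \<open>d \<in> G 0\<close> by (simp add: ev.hom_mult grading_eval_G0 G_zero)
  qed
  have "smult d ((map_mat (\<lambda>y. [:y:]) (map_mat (grading_eval l) B) * map_mat (grading_shift l) H) $$ (0, j))
      = (\<Sum>k<n. [:d * grading_eval l (B $$ (0, k)):] * grading_shift l (H $$ (k, j)))"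
    using H B n0 \<open>j < n\<close> by (subst index_mult_mat_sum[of _ n n _ n]) (auto simp: smult_sum2)
  also have "\<dots> = (\<Sum>k<n. if k = 0 then [:c:] * grading_shift l (H $$ (k, j)) else 0)"
    by (intro sum.cong refl) (simp add: B_row)
  also have "\<dots> = [:c:] * grading_shift l (H $$ (0, j))" using n0 by simp
  also have "\<dots> = [:c * (if j = 0 then d else 0):]"
    using row[OF \<open>j < n\<close>] \<open>d \<in> G 0\<close> by (simp add: grading_shift_G0 G_zero)
  finally show ?thesis by simp
qed

lemma grading_twist_deg0:
  fixes H B :: "'a mat" and l :: 'a
  assumes H: "H \<in> carrier_mat n n" and B: "B \<in> carrier_mat n n" and ij: "i < n" "j < n"
  shows "degree (map_poly deg0 ((map_mat (\<lambda>y. [:y:]) (map_mat (grading_eval l) B)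
    * map_mat (grading_shift l) H) $$ (i, j))) = 0"
proof -
  interpret d: comm_ring_hom deg0 by (rule grading_eval_hom)
  interpret md: map_poly_comm_ring_hom deg0 ..
  have "(map_mat (\<lambda>y. [:y:]) (map_mat (grading_eval l) B) * map_mat (grading_shift l) H) $$ (i, j)
      = (\<Sum>k<n. [:grading_eval l (B $$ (i, k)):] * grading_shift l (H $$ (k, j)))"
    using H B ij by (subst index_mult_mat_sum[of _ n n _ n]) auto
  then have "map_poly deg0 ((map_mat (\<lambda>y. [:y:]) (map_mat (grading_eval l) B)
      * map_mat (grading_shift l) H) $$ (i, j))
    = (\<Sum>k<n. [:deg0 (grading_eval l (B $$ (i, k))):] * [:deg0 (H $$ (k, j)):])"
    by (simp add: hom_distribs map_deg0_grading_shift mult.commute)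
  also have "degree \<dots> \<le> 0" by (intro degree_sum_le) auto
  finally show ?thesis by simp
qed

lemma second_patch_factor:
  fixes H B :: "'a mat" and a b :: 'a
  assumes st: "s \<in> G 0" "t \<in> G 0" and ab: "a * s ^ N + b * t ^ N = 1"
    and N: "2 * (K + J) + K \<le> N"
    and H: "H \<in> carrier_mat n n" and B: "B \<in> carrier_mat n n"
    and HB: "H * B = (s * t) ^ (K + J) \<cdot>\<^sub>m 1\<^sub>m n" and BH: "B * H = (s * t) ^ (K + J) \<cdot>\<^sub>m 1\<^sub>m n"
    and row: "\<And>j. j < n \<Longrightarrow> H $$ (0, j) = (if j = 0 then (s * t) ^ K else 0)"
  defines "P \<equiv> map_mat (\<lambda>y. [:y:]) (map_mat (grading_eval (b * t ^ N)) B)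
      * map_mat (grading_shift (b * t ^ N)) H"
  shows "lGL n t (R_plus G) (eval_div_mat n t s a N (K + J) P) (K + J)"
    "first_row_e1 n t (eval_div_mat n t s a N (K + J) P) (K + J)"
    "s ^ (K + J) \<cdot>\<^sub>m eval_div_mat n t s a N (K + J) P = map_mat (grading_eval (b * t ^ N)) B * H"
proof -
  define Q where "Q = map_mat (grading_shift (b * t ^ N)) B
      * map_mat (\<lambda>y. [:y:]) (map_mat (grading_eval (b * t ^ N)) H)"
  have uG: "(s * t) ^ k \<in> G 0" for k by (intro G0_power G0_mult st)
  note twist = grading_twist_inverse[OF H B uG HB BH, where l = "b * t ^ N", folded P_def Q_def]
  have P: "P \<in> carrier_mat n n" and Q: "Q \<in> carrier_mat n n"
    using H B by (simp_all add: P_def Q_def)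
  have scalar_sq: "[:(s * t) ^ (K + J) * (s * t) ^ (K + J):] = [:(t * s) ^ ((K + J) + (K + J)):]"
    by (simp add: power_add mult.commute)
  have const_term: "coeff (M $$ (i, j)) 0 = (if i = j then (t * s) ^ (K + J) else 0)"
    if "M \<in> carrier_mat n n" "map_mat (\<lambda>q. poly q 0) M = (s * t) ^ (K + J) \<cdot>\<^sub>m 1\<^sub>m n" "i < n" "j < n"
    for M i j
  proof -
    have "map_mat (\<lambda>q. poly q 0) M $$ (i, j) = ((s * t) ^ (K + J) \<cdot>\<^sub>m 1\<^sub>m n) $$ (i, j)"
      using that(2) by simp
    then show ?thesis using that(1,3,4) by (simp add: poly_0_coeff_0 mult.commute)
  qed
  show "lGL n t (R_plus G) (eval_div_mat n t s a N (K + J) P) (K + J)"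
  proof (rule eval_div_mat_lGL[OF P Q])
    fix i j assume ij: "i < n" "j < n"
    show "coeff (P $$ (i, j)) 0 = (if i = j then (t * s) ^ (K + J) else 0)"
      by (rule const_term[OF P twist(3) ij])
    show "coeff (Q $$ (i, j)) 0 = (if i = j then (t * s) ^ (K + J) else 0)"
      by (rule const_term[OF Q twist(4) ij])
    show "degree (map_poly deg0 (P $$ (i, j))) = 0"
      unfolding P_def by (rule grading_twist_deg0[OF H B ij])
  qed (use twist(1,2) scalar_sq N in simp_all)
  have "degree (smult ((t * s) ^ K) (P $$ (0, j))) = 0" if "j < n" for j
    unfolding P_def using grading_twist_first_row[OF H B uG uG HB row that] by (simp add: mult.commute)
  moreover have "K + J + K \<le> N" using N by simp
  ultimately show "first_row_e1 n t (eval_div_mat n t s a N (K + J) P) (K + J)"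
    by (rule first_row_e1_eval_div_mat)
  have "s ^ (K + J) \<cdot>\<^sub>m eval_div_mat n t s a N (K + J) P = map_mat (\<lambda>q. poly q (a * s ^ N)) P"
    using N by (intro eval_div_mat_scale[OF P const_term[OF P twist(3)]]) simp_all
  also have "\<dots> = map_mat (grading_eval (b * t ^ N)) B * map_mat (grading_eval 1) H"
    unfolding P_def grading_twist_eval[OF H B] using ab by (simp add: add.commute)
  also have "map_mat (grading_eval 1) H = H" using H by (auto simp: grading_eval_1)
  finally show "s ^ (K + J) \<cdot>\<^sub>m eval_div_mat n t s a N (K + J) P = map_mat (grading_eval (b * t ^ N)) B * H" .
qed

lemma grading_eval_mult_inverse:
  assumes H: "H \<in> carrier_mat n n" and B: "B \<in> carrier_mat n n" and M: "M \<in> carrier_mat n n"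
    and "c \<in> G 0" and HB: "H * B = c \<cdot>\<^sub>m 1\<^sub>m n"
  shows "map_mat (grading_eval l) H * (map_mat (grading_eval l) B * M) = c \<cdot>\<^sub>m M"
proof -
  interpret ev: comm_ring_hom "grading_eval l" by (rule grading_eval_hom)
  have "map_mat (grading_eval l) H * (map_mat (grading_eval l) B * M)
      = map_mat (grading_eval l) (H * B) * M"
    using H B M by (simp add: ev.mat_hom_mult)
  also have "\<dots> = c \<cdot>\<^sub>m M"
    unfolding HB ev.mat_hom_smult_one grading_eval_G0[OF \<open>c \<in> G 0\<close>]
    using M by (simp add: mult_smult_assoc_mat[of "1\<^sub>m n" n n])
  finally show ?thesis .
qed


lemma patch_integral:
  fixes H B :: "'a mat"
  assumes st: "s \<in> G 0" "t \<in> G 0" and "a * s + b * t = 1"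
    and H: "H \<in> carrier_mat n n" and B: "B \<in> carrier_mat n n"
    and HB: "H * B = (s * t) ^ (K + J) \<cdot>\<^sub>m 1\<^sub>m n" and BH: "B * H = (s * t) ^ (K + J) \<cdot>\<^sub>m 1\<^sub>m n"
    and H0: "map_mat deg0 H = (s * t) ^ K \<cdot>\<^sub>m 1\<^sub>m n" and B0: "map_mat deg0 B = (s * t) ^ J \<cdot>\<^sub>m 1\<^sub>m n"
    and row: "\<And>j. j < n \<Longrightarrow> H $$ (0, j) = (if j = 0 then (s * t) ^ K else 0)"
  obtains A1 A2 where "lGL n s (R_plus G) A1 K" "lGL n t (R_plus G) A2 (K + J)"
    "first_row_e1 n s A1 K" "first_row_e1 n t A2 (K + J)"
    "(t ^ K \<cdot>\<^sub>m A1) * (s ^ (K + J) \<cdot>\<^sub>m A2) = (s * t) ^ (K + J) \<cdot>\<^sub>m H"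
proof -
  define N where "N = 2 * (K + J) + K"
  obtain a' b' where ab: "a' * s ^ N + b' * t ^ N = 1" using assms(3) comaximal_powers by blast
  define A1 where "A1 = eval_div_mat n s t b' N K (map_mat grading_poly H)"
  define A2 where "A2 = eval_div_mat n t s a' N (K + J) (map_mat (\<lambda>y. [:y:])
      (map_mat (grading_eval (b' * t ^ N)) B) * map_mat (grading_shift (b' * t ^ N)) H)"
  have N: "K + J \<le> N" "2 * (K + J) + K \<le> N" by (simp_all add: N_def)
  have A1: "lGL n s (R_plus G) A1 K" "first_row_e1 n s A1 K"
    "t ^ K \<cdot>\<^sub>m A1 = map_mat (grading_eval (b' * t ^ N)) H"
    using first_patch_factor[OF st N(1) H B HB BH H0 B0 row] unfolding A1_def by blast+
  have A2: "lGL n t (R_plus G) A2 (K + J)" "first_row_e1 n t A2 (K + J)"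
    "s ^ (K + J) \<cdot>\<^sub>m A2 = map_mat (grading_eval (b' * t ^ N)) B * H"
    using second_patch_factor[OF st ab N(2) H B HB BH row] unfolding A2_def by blast+
  have "(t ^ K \<cdot>\<^sub>m A1) * (s ^ (K + J) \<cdot>\<^sub>m A2) = (s * t) ^ (K + J) \<cdot>\<^sub>m H"
    unfolding A1(3) A2(3) using HB st
    by (intro grading_eval_mult_inverse[OF H B H]) (simp_all add: G0_power G0_mult)
  then show thesis using A1 A2 that by blast
qed
end

theorem mainTheorem5:
  fixes G :: "nat \<Rightarrow> 'a::comm_ring_1 set"
    and s t :: 'a and n :: nat and H :: "'a mat" and k :: nat
  assumes "(1::'a) \<noteq> 0"
    and "noetherian TYPE('a)"
    and "finite_krull_dim TYPE('a)"
    and "graded_ring G"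
    and "nontrivial_grading G"
    and "s \<in> G 0" and "t \<in> G 0"
    and "\<exists>a\<in>G 0. \<exists>b\<in>G 0. a * s + b * t = 1"
    and "lGL n (s * t) (R_plus G) H k"
    and "first_row_e1 n (s * t) H k"
  shows "\<exists>A1 k1 A2 k2.
           lGL n s (R_plus G) A1 k1 \<and> lGL n t (R_plus G) A2 k2 \<and>
           first_row_e1 n s A1 k1 \<and> first_row_e1 n t A2 k2 \<and>
           lmat_eq n (s * t) H k ((t ^ k1 \<cdot>\<^sub>m A1) * (s ^ k2 \<cdot>\<^sub>m A2)) (k1 + k2)"
proof -
  interpret graded G by unfold_locales (rule assms(4))
  have st: "s * t \<in> G 0" using assms(6,7) by (rule G0_mult)
  obtain a b where ab: "a * s + b * t = 1" using assms(8) by blast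
  obtain B c J where B: "B \<in> carrier_mat n n"
    and HB: "((s * t) ^ c \<cdot>\<^sub>m H) * B = (s * t) ^ (k + c + J) \<cdot>\<^sub>m 1\<^sub>m n"
    and BH: "B * ((s * t) ^ c \<cdot>\<^sub>m H) = (s * t) ^ (k + c + J) \<cdot>\<^sub>m 1\<^sub>m n"
    and H0: "map_mat deg0 ((s * t) ^ c \<cdot>\<^sub>m H) = (s * t) ^ (k + c) \<cdot>\<^sub>m 1\<^sub>m n"
    and B0: "map_mat deg0 B = (s * t) ^ J \<cdot>\<^sub>m 1\<^sub>m n"
    and row: "\<And>j. j < n \<Longrightarrow> ((s * t) ^ c \<cdot>\<^sub>m H) $$ (0, j) = (if j = 0 then (s * t) ^ (k + c) else 0)"
    using integral_representative[OF st assms(9,10)] by blast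
  have Hc: "H \<in> carrier_mat n n" using assms(9) unfolding lGL_def by blast
  then have "(s * t) ^ c \<cdot>\<^sub>m H \<in> carrier_mat n n" by simp
  from patch_integral[OF assms(6,7) ab this B HB BH H0 B0 row]
  obtain A1 A2 where A: "lGL n s (R_plus G) A1 (k + c)" "lGL n t (R_plus G) A2 (k + c + J)"
    "first_row_e1 n s A1 (k + c)" "first_row_e1 n t A2 (k + c + J)"
    and prod: "(t ^ (k + c) \<cdot>\<^sub>m A1) * (s ^ (k + c + J) \<cdot>\<^sub>m A2) = (s * t) ^ (k + c + J) \<cdot>\<^sub>m ((s * t) ^ c \<cdot>\<^sub>m H)"
    by blast
  have "(s * t) ^ (k + c + J) \<cdot>\<^sub>m ((s * t) ^ c \<cdot>\<^sub>m H) = (s * t) ^ (k + c + J + c) \<cdot>\<^sub>m H"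
    using Hc by (auto intro!: eq_matI simp: power_add)
  then have "lmat_eq n (s * t) H k ((t ^ (k + c) \<cdot>\<^sub>m A1) * (s ^ (k + c + J) \<cdot>\<^sub>m A2)) (k + c + (k + c + J))"
    unfolding prod using lmat_eq_smult[OF Hc, of "s * t" k "k + c + J + c"] by (simp add: ac_simps)
  then show ?thesis using A by blast
qed

end
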